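(* Let $r\ge1$ and let $\tau,\tau'$ be permutations of $F^r$ fixing $\mathbf 0$, such that $S_\tau$ and $S_{\tau'}$ are transitive codes of length $2^{r+1}$. Then there exist a vector $x\in F^{2^{r+1}}$ and a permutation $\pi$ of coordinates with $x+\pi(S_\tau)=S_{\tau'}$ if and only if there exists a permutation $\pi'$ of the points with $SQS_\tau\sim_{\pi'}SQS_{\tau'}$.
   Context: $F=\mathrm{GF}(2)$, $\mathbf 0$ is the all-zero vector. Index the coordinates of $F^{2^r}$ by the vectors of $F^r$; $e_a$ is the unit vector at position $a$. $\mathcal H=\{x\in F^{2^r}:\sum_{a:x_a=1}a=\mathbf 0,\ \mathrm{wt}(x)\text{ even}\}$ is the extended Hamming code. For $x,y\in F^{2^r}$, $x|y$ is the concatenation and $C\times D=\{x|y:x\in C,y\in D\}$. $S_\tau=\bigcup_{a\in F^r}(\mathcal H+e_a+e_{\mathbf 0})\times(\mathcal H+e_{\tau(a)}+e_{\tau(\mathbf 0)})\subseteq F^{2^{r+1}}$. Coordinate positions of $F^{2^{r+1}}$ are denoted $(\{a\},\emptyset)$ (first half) and $(\emptyset,\{a\})$ (second half); $(X,Y)$ denotes the set of positions $\{(\{x\},\emptyset):x\in X\}\cup\{(\emptyset,\{y\}):y\in Y\}$. $SQS_\tau$ consists of the quadruples $Q_0=\{(\{a,b,c,d\},\emptyset): a,b,c,d \text{ pairwise distinct}, a+b+c+d=\mathbf 0\}$, $Q_1=\{(\emptyset,\{a,b,c,d\}): \text{same condition}\}$, $Q_\tau=\{(\{a,c\},\{b,d\}):\tau(a+c)=b+d\neq\mathbf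 0\}$. $SQS_\tau\sim_{\pi'}SQS_{\tau'}$ means $\pi'$ maps the quadruples of $SQS_\tau$ onto those of $SQS_{\tau'}$. Permutations act on vectors by $\pi(y)_i=y_{\pi^{-1}(i)}$. A code $C$ is transitive if the group $\{y\mapsto x+\pi(y)\}$ stabilizer $\mathrm{Aut}(C)$ of $C$ has a subgroup acting transitively on $C$. *)

theory Defs
  imports Main
begin

text \<open>A vector of F^r (F = GF(2)) is represented by its support,
a subset of {0..<r}; addition is symmetric difference, the zero vector is {}.
A binary vector of length 2^r whose coordinates are indexed by F^r is likewise
represented by its support, a set of points of F^r. Coordinates of F^(2^(r+1))
are Inl a (first half, position ({a},{})) and Inr a (second half, position ({},{a})).\<close>

definition vadd :: "'a set \<Rightarrow> 'a set \<Rightarrow> 'a set" where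
  "vadd A B = (A - B) \<union> (B - A)"

definition pts :: "nat \<Rightarrow> nat set set" where
  "pts r = {A. A \<subseteq> {..<r}}"

definition coords :: "nat \<Rightarrow> (nat set + nat set) set" where
  "coords r = Inl ` pts r \<union> Inr ` pts r"

text \<open>sum of the points a with x_a = 1 (coordinatewise XOR)\<close>
definition vsum :: "nat set set \<Rightarrow> nat set" where
  "vsum x = {i. odd (card {a \<in> x. i \<in> a})}"

definition hamming :: "nat \<Rightarrow> nat set set set" where
  "hamming r = {x. x \<subseteq> pts r \<and> finite x \<and> vsum x = {} \<and> even (card x)}"

definition concat :: "nat set set \<Rightarrow> nat set set \<Rightarrow> (nat set + nat set) set" where
  "concat x y = Inl ` x \<union> Inr ` y"

definition hcoset :: "nat \<Rightarrow> nat set \<Rightarrow> nat set \<Rightarrow> nat set set set" where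
  "hcoset r a b = (\<lambda>h. vadd (vadd h {a}) {b}) ` hamming r"

definition S_code :: "nat \<Rightarrow> (nat set \<Rightarrow> nat set) \<Rightarrow> (nat set + nat set) set set" where
  "S_code r \<tau> = (\<Union>a\<in>pts r. {concat x y | x y. x \<in> hcoset r a {} \<and> y \<in> hcoset r (\<tau> a) (\<tau> {})})"

text \<open>the map y \<mapsto> x + \<pi>(y), where \<pi>(y)_i = y_{\<pi>^{-1}(i)}, i.e. supp \<pi>(y) = \<pi> ` supp y\<close>
definition isom_map :: "'p set \<Rightarrow> ('p \<Rightarrow> 'p) \<Rightarrow> 'p set \<Rightarrow> 'p set" where
  "isom_map x \<pi> y = vadd x (\<pi> ` y)"

text \<open>Aut(C) = {y \<mapsto> x + \<pi>(y) stabilizing C}; C is transitive if a subgroup of Aut(C)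
acts transitively on C, i.e. (taking the whole group) Aut(C) acts transitively on C.\<close>
definition transitive_code :: "nat \<Rightarrow> (nat set + nat set) set set \<Rightarrow> bool" where
  "transitive_code r C \<longleftrightarrow>
     (\<forall>c\<in>C. \<forall>d\<in>C. \<exists>x \<pi>. x \<subseteq> coords r \<and> bij_betw \<pi> (coords r) (coords r)
        \<and> isom_map x \<pi> ` C = C \<and> isom_map x \<pi> c = d)"

definition Q0 :: "nat \<Rightarrow> (nat set + nat set) set set" where
  "Q0 r = {Inl ` {a, b, c, d} | a b c d. a \<in> pts r \<and> b \<in> pts r \<and> c \<in> pts r \<and> d \<in> pts r
      \<and> a \<noteq> b \<and> a \<noteq> c \<and> a \<noteq> d \<and> b \<noteq> c \<and> b \<noteq> d \<and> c \<noteq> d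
      \<and> vadd (vadd a b) (vadd c d) = {}}"

definition Q1 :: "nat \<Rightarrow> (nat set + nat set) set set" where
  "Q1 r = {Inr ` {a, b, c, d} | a b c d. a \<in> pts r \<and> b \<in> pts r \<and> c \<in> pts r \<and> d \<in> pts r
      \<and> a \<noteq> b \<and> a \<noteq> c \<and> a \<noteq> d \<and> b \<noteq> c \<and> b \<noteq> d \<and> c \<noteq> d
      \<and> vadd (vadd a b) (vadd c d) = {}}"

definition Qtau :: "nat \<Rightarrow> (nat set \<Rightarrow> nat set) \<Rightarrow> (nat set + nat set) set set" where
  "Qtau r \<tau> = {Inl ` {a, c} \<union> Inr ` {b, d} | a b c d. a \<in> pts r \<and> b \<in> pts r \<and> c \<in> pts r \<and> d \<in> pts r
      \<and> \<tau> (vadd a c) = vadd b d \<and> vadd b d \<noteq> {}}"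

definition SQS :: "nat \<Rightarrow> (nat set \<Rightarrow> nat set) \<Rightarrow> (nat set + nat set) set set" where
  "SQS r \<tau> = Q0 r \<union> Q1 r \<union> Qtau r \<tau>"

end

theory Submission
  imports Defs
begin

text \<open>A word lies in S_\<tau> iff both halves have even weight and the sum of the points of the
  right half is \<tau> applied to the sum of the points of the left half. Consequently S_\<tau> has minimum
  weight 4 and its weight-4 words are exactly the blocks of SQS_\<tau>, so a coordinate permutation
  carrying S_\<tau> onto S_\<tau>' carries SQS_\<tau> onto SQS_\<tau>'; transitivity of S_\<tau>' removes the translation
  part of an arbitrary equivalence.

  Conversely, a block permutation maps S_\<tau> into S_\<tau>' by induction on the weight: a word of weight
  above 4 is shortened by adding a block lying inside one half, and such blocks belong to the kernel
  of the code. The blocks of SQS_\<tau> in the kernel of S_\<tau> are characterised combinatorially (adding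
  a block that meets them in two points yields a block), so a block permutation maps them to
  kernel blocks of S_\<tau>'. For a mixed block this closedness amounts to additivity of \<tau> along the
  block's direction.\<close>

lemma vadd_simps [simp]:
  "vadd A {} = A" "vadd {} A = A" "vadd A A = {}" "vadd A (vadd A B) = B"
  by (auto simp: vadd_def)

lemma vadd_iff: "i \<in> vadd A B \<longleftrightarrow> (i \<in> A \<longleftrightarrow> i \<notin> B)"
  by (auto simp: vadd_def)

lemma vadd_assoc: "vadd (vadd A B) C = vadd A (vadd B C)"
  by (auto simp: vadd_def)

lemma vadd_cancel_right [simp]: "vadd (vadd A B) B = A"
  by (auto simp: vadd_def)

lemma vadd_eq_empty_iff [simp]: "vadd A B = {} \<longleftrightarrow> A = B" "{} = vadd A B \<longleftrightarrow> A = B"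
  by (auto simp: vadd_def)

lemma vadd_eq_self_iff [simp]: "vadd A B = A \<longleftrightarrow> B = {}" "A = vadd A B \<longleftrightarrow> B = {}"
  by (auto simp: vadd_def)

lemma vadd_vadd_same_left: "vadd (vadd a u) (vadd a w) = vadd u w"
  by (auto simp: vadd_def)

lemma vadd_doubletons: "x \<noteq> y \<Longrightarrow> x \<noteq> a \<Longrightarrow> y \<noteq> a \<Longrightarrow> vadd {a, x} {a, y} = {x, y}"
  by (auto simp: vadd_def)

lemma vadd_left_cancel [simp]: "vadd A B = vadd A C \<longleftrightarrow> B = C"
  by (metis vadd_simps(4))

lemma finite_vadd [simp]: "finite A \<Longrightarrow> finite B \<Longrightarrow> finite (vadd A B)"
  by (simp add: vadd_def)

lemma vadd_subset: "A \<subseteq> P \<Longrightarrow> B \<subseteq> P \<Longrightarrow> vadd A B \<subseteq> P"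
  by (auto simp: vadd_def)

lemma vadd_in_pts: "a \<in> pts r \<Longrightarrow> b \<in> pts r \<Longrightarrow> vadd a b \<in> pts r"
  by (auto simp: pts_def vadd_def)

lemma vadd_Plus [simp]: "vadd (A <+> B) (C <+> D) = vadd A C <+> vadd B D"
  by (auto simp: vadd_def)

lemma Int_Plus [simp]: "(A <+> B) \<inter> (C <+> D) = (A \<inter> C) <+> (B \<inter> D)"
  by auto

lemma image_vadd:
  "inj_on f C \<Longrightarrow> A \<subseteq> C \<Longrightarrow> B \<subseteq> C \<Longrightarrow> f ` vadd A B = vadd (f ` A) (f ` B)"
  using inj_on_image_set_diff[of f C A B] inj_on_image_set_diff[of f C B A]
  by (auto simp: vadd_def)

lemma card_vadd:
  assumes "finite A" "finite B"
  shows "card (vadd A B) + 2 * card (A \<inter> B) = card A + card B"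
proof -
  have "card (vadd A B) = card (A - B) + card (B - A)"
    unfolding vadd_def using assms by (subst card_Un_disjoint) auto
  moreover have "card A = card (A \<inter> B) + card (A - B)" "card B = card (A \<inter> B) + card (B - A)"
    using assms card_Int_Diff[of A B] card_Int_Diff[of B A] by (simp_all add: Int_commute)
  ultimately show ?thesis by linarith
qed

lemma even_card_vadd:
  "finite A \<Longrightarrow> finite B \<Longrightarrow> even (card (vadd A B)) \<longleftrightarrow> (even (card A) \<longleftrightarrow> even (card B))"
  by (metis card_vadd even_add even_mult_iff even_numeral)

lemma card_vadd_less:
  "finite A \<Longrightarrow> finite B \<Longrightarrow> card A < 2 * card (A \<inter> B) \<Longrightarrow> card (vadd A B) < card B"
  using card_vadd[of A B] by linarith

lemma vsum_insert:
  assumes "finite x" "a \<notin> x"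
  shows "vsum (insert a x) = vadd a (vsum x)"
proof (rule set_eqI)
  fix i
  have "{b \<in> insert a x. i \<in> b} = (if i \<in> a then insert a {b \<in> x. i \<in> b} else {b \<in> x. i \<in> b})"
    by auto
  then show "i \<in> vsum (insert a x) \<longleftrightarrow> i \<in> vadd a (vsum x)"
    using assms by (simp add: vsum_def vadd_def)
qed

lemma vsum_empty [simp]: "vsum {} = {}"
  by (simp add: vsum_def)

lemma vsum_singleton [simp]: "vsum {a} = a"
  using vsum_insert[of "{}" a] by simp

lemma vsum_doubleton: "a \<noteq> b \<Longrightarrow> vsum {a, b} = vadd a b"
  by (simp add: vsum_insert)

lemma vsum_vadd:
  assumes "finite x" "finite y"
  shows "vsum (vadd x y) = vadd (vsum x) (vsum y)"
proof (rule set_eqI)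
  fix i
  have "{b \<in> vadd x y. i \<in> b} = vadd {b \<in> x. i \<in> b} {b \<in> y. i \<in> b}"
    by (auto simp: vadd_def)
  then show "i \<in> vsum (vadd x y) \<longleftrightarrow> i \<in> vadd (vsum x) (vsum y)"
    using assms even_card_vadd[of "{b \<in> x. i \<in> b}" "{b \<in> y. i \<in> b}"]
    unfolding vsum_def vadd_iff by auto
qed

lemma vsum_in_pts: "x \<subseteq> pts r \<Longrightarrow> vsum x \<in> pts r"
proof -
  have "i < r" if "odd (card {a \<in> x. i \<in> a})" "x \<subseteq> pts r" for i
  proof -
    from that(1) have "{a \<in> x. i \<in> a} \<noteq> {}" by (metis card.empty even_zero)
    with that(2) show ?thesis by (auto simp: pts_def)
  qed
  then show "x \<subseteq> pts r \<Longrightarrow> vsum x \<in> pts r" by (auto simp: vsum_def pts_def)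
qed

lemma finite_pts [simp]: "finite (pts r)"
  by (simp add: pts_def)

lemma finite_subset_pts: "A \<subseteq> pts r \<Longrightarrow> finite A"
  using rev_finite_subset[OF finite_pts] .

lemma empty_in_pts [simp]: "{} \<in> pts r"
  by (simp add: pts_def)

lemma coords_eq: "coords r = pts r <+> pts r"
  by (simp add: coords_def Plus_def)

lemma Plus_vimage: "Inl -` c <+> Inr -` c = c"
proof (rule set_eqI)
  show "z \<in> Inl -` c <+> Inr -` c \<longleftrightarrow> z \<in> c" for z
    by (cases z) auto
qed

lemma vimage_Plus [simp]: "Inl -` (A <+> B) = A" "Inr -` (A <+> B) = B"
  by auto

lemma subset_coords_iff: "c \<subseteq> coords r \<longleftrightarrow> Inl -` c \<subseteq> pts r \<and> Inr -` c \<subseteq> pts r"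
proof
  assume "Inl -` c \<subseteq> pts r \<and> Inr -` c \<subseteq> pts r"
  then have "Inl -` c <+> Inr -` c \<subseteq> coords r"
    by (auto simp: coords_eq)
  then show "c \<subseteq> coords r"
    by (simp only: Plus_vimage)
qed (auto simp: coords_eq)

lemma bij_pts_eq_empty_iff:
  "bij_betw \<tau> (pts r) (pts r) \<Longrightarrow> \<tau> {} = {} \<Longrightarrow> u \<in> pts r \<Longrightarrow> \<tau> u = {} \<longleftrightarrow> u = {}"
  by (metis bij_betw_iff_bijections empty_in_pts)

lemma hcoset_iff:
  assumes "a \<in> pts r"
  shows "x \<in> hcoset r a {} \<longleftrightarrow> x \<subseteq> pts r \<and> even (card x) \<and> vsum x = a"
proof -
  define D where "D = vadd {a} {{}}"
  have D_pts: "D \<subseteq> pts r"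
    using assms vadd_subset[of "{a}" "pts r" "{{}}"] by (auto simp: D_def)
  then have "finite D"
    by (rule finite_subset_pts)
  have "even (card D)" "vsum D = a"
    by (simp_all add: D_def even_card_vadd vsum_vadd)
  have "hcoset r a {} = (\<lambda>h. vadd h D) ` hamming r"
    by (simp add: hcoset_def D_def vadd_assoc)
  then have "x \<in> hcoset r a {} \<longleftrightarrow> vadd x D \<in> hamming r"
    by (auto intro: image_eqI[of x _ "vadd x D"])
  also have "\<dots> \<longleftrightarrow> x \<subseteq> pts r \<and> even (card x) \<and> vsum x = a"
  proof (cases "x \<subseteq> pts r")
    case True
    then have "finite x" "vadd x D \<subseteq> pts r"
      using D_pts by (simp_all add: finite_subset_pts vadd_subset)
    then show ?thesis
      using \<open>finite D\<close> \<open>even (card D)\<close> \<open>vsum D = a\<close> True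
      by (auto simp: hamming_def even_card_vadd vsum_vadd)
  next
    case False
    then have "\<not> vadd x D \<subseteq> pts r"
      using D_pts vadd_subset[of "vadd x D" "pts r" D] by auto
    with False show ?thesis
      by (simp add: hamming_def)
  qed
  finally show ?thesis .
qed

lemma S_code_iff:
  assumes \<tau>_pts: "\<tau> ` pts r \<subseteq> pts r" and "\<tau> {} = {}"
  shows "c \<in> S_code r \<tau> \<longleftrightarrow> c \<subseteq> coords r \<and> even (card (Inl -` c)) \<and> even (card (Inr -` c))
           \<and> vsum (Inr -` c) = \<tau> (vsum (Inl -` c))"
proof
  assume "c \<in> S_code r \<tau>"
  then obtain a x y where "a \<in> pts r" "c = x <+> y" "x \<in> hcoset r a {}" "y \<in> hcoset r (\<tau> a) {}"
    by (auto simp: S_code_def concat_def Plus_def \<open>\<tau> {} = {}\<close>)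
  moreover have "\<tau> a \<in> pts r"
    using \<tau>_pts \<open>a \<in> pts r\<close> by blast
  ultimately show "c \<subseteq> coords r \<and> even (card (Inl -` c)) \<and> even (card (Inr -` c))
           \<and> vsum (Inr -` c) = \<tau> (vsum (Inl -` c))"
    by (simp add: hcoset_iff subset_coords_iff)
next
  assume c: "c \<subseteq> coords r \<and> even (card (Inl -` c)) \<and> even (card (Inr -` c))
           \<and> vsum (Inr -` c) = \<tau> (vsum (Inl -` c))"
  define a where "a = vsum (Inl -` c)"
  have "a \<in> pts r"
    using c vsum_in_pts by (simp add: a_def subset_coords_iff)
  moreover have "Inl -` c \<in> hcoset r a {}" "Inr -` c \<in> hcoset r (\<tau> a) {}"
    using c \<open>a \<in> pts r\<close> \<tau>_pts by (auto simp: hcoset_iff a_def subset_coords_iff)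
  moreover have "c = concat (Inl -` c) (Inr -` c)"
    by (simp only: concat_def Plus_def[symmetric] Plus_vimage)
  ultimately show "c \<in> S_code r \<tau>"
    unfolding S_code_def \<open>\<tau> {} = {}\<close> by blast
qed

lemma Plus_in_S_code_iff:
  assumes "\<tau> ` pts r \<subseteq> pts r" and "\<tau> {} = {}"
  shows "L <+> R \<in> S_code r \<tau> \<longleftrightarrow> L \<subseteq> pts r \<and> R \<subseteq> pts r \<and> even (card L) \<and> even (card R)
           \<and> vsum R = \<tau> (vsum L)"
  by (simp add: S_code_iff[OF assms] subset_coords_iff conj_assoc)

lemma card_4_iff: "card q = 4 \<longleftrightarrow> (\<exists>a b c d. q = {a, b, c, d}
      \<and> a \<noteq> b \<and> a \<noteq> c \<and> a \<noteq> d \<and> b \<noteq> c \<and> b \<noteq> d \<and> c \<noteq> d)"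
proof
  assume "card q = 4"
  then obtain a where "a \<in> q"
    by fastforce
  with \<open>card q = 4\<close> have "card (q - {a}) = 3"
    by (simp add: card_Diff_singleton_if)
  then obtain b c d where "q - {a} = {b, c, d}" "b \<noteq> c" "c \<noteq> d" "b \<noteq> d"
    by (auto simp: card_3_iff)
  moreover have "q = insert a (q - {a})"
    using \<open>a \<in> q\<close> by blast
  ultimately show "\<exists>a b c d. q = {a, b, c, d} \<and> a \<noteq> b \<and> a \<noteq> c \<and> a \<noteq> d \<and> b \<noteq> c \<and> b \<noteq> d \<and> c \<noteq> d"
    by blast
qed auto

lemma vsum_four:
  "a \<noteq> b \<Longrightarrow> a \<noteq> c \<Longrightarrow> a \<noteq> d \<Longrightarrow> b \<noteq> c \<Longrightarrow> b \<noteq> d \<Longrightarrow> c \<noteq> d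
    \<Longrightarrow> vsum {a, b, c, d} = vadd (vadd a b) (vadd c d)"
  by (simp add: vsum_insert vadd_assoc)

definition quadruples :: "nat \<Rightarrow> nat set set set" where
  "quadruples r = {q. q \<subseteq> pts r \<and> card q = 4 \<and> vsum q = {}}"

lemma quadruples_iff:
  "q \<in> quadruples r \<longleftrightarrow> (\<exists>a b c d. q = {a, b, c, d}
      \<and> a \<in> pts r \<and> b \<in> pts r \<and> c \<in> pts r \<and> d \<in> pts r
      \<and> a \<noteq> b \<and> a \<noteq> c \<and> a \<noteq> d \<and> b \<noteq> c \<and> b \<noteq> d \<and> c \<noteq> d
      \<and> vadd (vadd a b) (vadd c d) = {})" (is "_ \<longleftrightarrow> (\<exists>a b c d. ?quad a b c d)")
proof
  assume q: "q \<in> quadruples r"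
  then have "card q = 4"
    by (simp add: quadruples_def)
  then obtain a b c d where "q = {a, b, c, d}"
    "a \<noteq> b" "a \<noteq> c" "a \<noteq> d" "b \<noteq> c" "b \<noteq> d" "c \<noteq> d"
    unfolding card_4_iff by blast
  with q have "?quad a b c d"
    by (auto simp: quadruples_def vsum_four)
  then show "\<exists>a b c d. ?quad a b c d"
    by blast
next
  assume "\<exists>a b c d. ?quad a b c d"
  then obtain a b c d where "?quad a b c d"
    by blast
  then show "q \<in> quadruples r"
    by (auto simp: quadruples_def vsum_four)
qed

lemma image_quadruples_eq:
  "(\<lambda>q. f ` q) ` quadruples r = {f ` {a, b, c, d} | a b c d. a \<in> pts r \<and> b \<in> pts r \<and> c \<in> pts r
      \<and> d \<in> pts r \<and> a \<noteq> b \<and> a \<noteq> c \<and> a \<noteq> d \<and> b \<noteq> c \<and> b \<noteq> d \<and> c \<noteq> d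
      \<and> vadd (vadd a b) (vadd c d) = {}}" (is "_ = {_ | a b c d. ?quad a b c d}")
proof (intro equalityI subsetI)
  fix x
  assume "x \<in> (\<lambda>q. f ` q) ` quadruples r"
  then obtain q where "q \<in> quadruples r" "x = f ` q"
    by blast
  moreover from \<open>q \<in> quadruples r\<close> obtain a b c d where "q = {a, b, c, d}" "?quad a b c d"
    unfolding quadruples_iff by blast
  ultimately show "x \<in> {f ` {a, b, c, d} | a b c d. ?quad a b c d}"
    by blast
next
  fix x
  assume "x \<in> {f ` {a, b, c, d} | a b c d. ?quad a b c d}"
  then obtain a b c d where "x = f ` {a, b, c, d}" "?quad a b c d"
    by blast
  moreover from \<open>?quad a b c d\<close> have "{a, b, c, d} \<in> quadruples r"
    by (simp add: quadruples_def vsum_four)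
  ultimately show "x \<in> (\<lambda>q. f ` q) ` quadruples r"
    by blast
qed

lemma Q0_eq: "Q0 r = (\<lambda>q. Inl ` q) ` quadruples r"
  by (simp only: Q0_def image_quadruples_eq)

lemma Q1_eq: "Q1 r = (\<lambda>q. Inr ` q) ` quadruples r"
  by (simp only: Q1_def image_quadruples_eq)

lemma S_code_halvesE:
  assumes "\<tau> ` pts r \<subseteq> pts r" "\<tau> {} = {}" "c \<in> S_code r \<tau>"
  obtains L R where "c = L <+> R" "L \<subseteq> pts r" "R \<subseteq> pts r" "finite L" "finite R"
    "even (card L)" "even (card R)" "vsum R = \<tau> (vsum L)" "card c = card L + card R"
proof -
  define L R where "L = Inl -` c" and "R = Inr -` c"
  have "c = L <+> R"
    by (simp add: L_def R_def Plus_vimage)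
  with assms have "L \<subseteq> pts r" "R \<subseteq> pts r" "even (card L)" "even (card R)" "vsum R = \<tau> (vsum L)"
    by (simp_all add: Plus_in_S_code_iff)
  moreover from calculation have "finite L" "finite R"
    by (simp_all add: finite_subset_pts)
  ultimately show thesis
    using that \<open>c = L <+> R\<close> by (simp add: card_Plus)
qed

lemma SQS_subset_S_code:
  assumes "\<tau> ` pts r \<subseteq> pts r" "\<tau> {} = {}"
  shows "SQS r \<tau> \<subseteq> {c \<in> S_code r \<tau>. card c = 4}"
proof
  note S_iff = Plus_in_S_code_iff[OF assms]
  fix c
  assume "c \<in> SQS r \<tau>"
  then consider "c \<in> Q0 r" | "c \<in> Q1 r" | "c \<in> Qtau r \<tau>"
    by (auto simp: SQS_def)
  then show "c \<in> {c \<in> S_code r \<tau>. card c = 4}"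
  proof cases
    case 1
    then obtain q where "q \<in> quadruples r" "c = q <+> {}"
      by (auto simp: Q0_eq Plus_def)
    then show ?thesis
      using \<open>\<tau> {} = {}\<close> by (auto simp: S_iff quadruples_def card_Plus finite_subset_pts)
  next
    case 2
    then obtain q where "q \<in> quadruples r" "c = {} <+> q"
      by (auto simp: Q1_eq Plus_def)
    then show ?thesis
      using \<open>\<tau> {} = {}\<close> by (auto simp: S_iff quadruples_def card_Plus finite_subset_pts)
  next
    case 3
    then obtain a e b d where "c = {a, e} <+> {b, d}" "a \<in> pts r" "e \<in> pts r" "b \<in> pts r"
      "d \<in> pts r" "\<tau> (vadd a e) = vadd b d" "vadd b d \<noteq> {}"
      unfolding Qtau_def Plus_def by blast
    moreover have "a \<noteq> e" "b \<noteq> d"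
      using \<open>\<tau> (vadd a e) = vadd b d\<close> \<open>vadd b d \<noteq> {}\<close> \<open>\<tau> {} = {}\<close> by auto
    ultimately show ?thesis
      by (simp add: S_iff card_Plus vsum_doubleton)
  qed
qed

lemma S_code_weight_4_in_SQS:
  assumes \<tau>: "bij_betw \<tau> (pts r) (pts r)" "\<tau> {} = {}" and "c \<in> S_code r \<tau>" "card c = 4"
  shows "c \<in> SQS r \<tau>"
proof -
  obtain L R where LR: "c = L <+> R" "L \<subseteq> pts r" "R \<subseteq> pts r" "finite L" "finite R"
    "even (card L)" "even (card R)" "vsum R = \<tau> (vsum L)" "card c = card L + card R"
    by (rule S_code_halvesE[OF bij_betw_imp_surj_on[OF \<tau>(1), THEN equalityD1] \<tau>(2) assms(3)])
  have "card L = 4 \<and> card R = 0 \<or> card L = 0 \<and> card R = 4 \<or> card L = 2 \<and> card R = 2"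
    using LR(6,7,9) \<open>card c = 4\<close> by presburger
  then show ?thesis
  proof (elim disjE conjE)
    assume "card L = 4" "card R = 0"
    then have "R = {}"
      using LR(5) by simp
    then have "\<tau> (vsum L) = {}"
      using LR(8) by simp
    then have "L \<in> quadruples r"
      using bij_pts_eq_empty_iff[OF \<tau> vsum_in_pts[OF LR(2)]] LR(2) \<open>card L = 4\<close>
      by (simp add: quadruples_def)
    moreover have "c = Inl ` L"
      using LR(1) \<open>R = {}\<close> by (simp add: Plus_def)
    ultimately show ?thesis
      by (simp add: SQS_def Q0_eq)
  next
    assume "card L = 0" "card R = 4"
    then have "L = {}"
      using LR(4) by simp
    then have "R \<in> quadruples r"
      using LR(3,8) \<open>card R = 4\<close> \<tau>(2) by (simp add: quadruples_def)
    moreover have "c = Inr ` R"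
      using LR(1) \<open>L = {}\<close> by (simp add: Plus_def)
    ultimately show ?thesis
      by (simp add: SQS_def Q1_eq)
  next
    assume "card L = 2" "card R = 2"
    then obtain a e b d where "L = {a, e}" "a \<noteq> e" "R = {b, d}" "b \<noteq> d"
      unfolding card_2_iff by blast
    moreover from calculation have "\<tau> (vadd a e) = vadd b d"
      using LR(8) by (simp add: vsum_doubleton)
    ultimately have "c \<in> Qtau r \<tau>"
      using LR(1-3) unfolding Qtau_def mem_Collect_eq Plus_def
      by (intro exI[of _ a] exI[of _ b] exI[of _ e] exI[of _ d]) simp
    then show ?thesis
      by (simp add: SQS_def)
  qed
qed

lemma SQS_eq:
  assumes "bij_betw \<tau> (pts r) (pts r)" "\<tau> {} = {}"
  shows "SQS r \<tau> = {c \<in> S_code r \<tau>. card c = 4}"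
proof
  show "SQS r \<tau> \<subseteq> {c \<in> S_code r \<tau>. card c = 4}"
    by (rule SQS_subset_S_code[OF bij_betw_imp_surj_on[OF assms(1), THEN equalityD1] assms(2)])
  show "{c \<in> S_code r \<tau>. card c = 4} \<subseteq> SQS r \<tau>"
    using S_code_weight_4_in_SQS[OF assms] by blast
qed

lemma S_code_card_ge_4:
  assumes \<tau>: "bij_betw \<tau> (pts r) (pts r)" "\<tau> {} = {}" and "c \<in> S_code r \<tau>" "c \<noteq> {}"
  shows "4 \<le> card c"
proof (rule ccontr)
  assume "\<not> 4 \<le> card c"
  obtain L R where LR: "c = L <+> R" "L \<subseteq> pts r" "R \<subseteq> pts r" "finite L" "finite R"
    "even (card L)" "even (card R)" "vsum R = \<tau> (vsum L)" "card c = card L + card R"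
    by (rule S_code_halvesE[OF bij_betw_imp_surj_on[OF \<tau>(1), THEN equalityD1] \<tau>(2) assms(3)])
  have "card L = 0 \<and> card R = 0 \<or> card L = 2 \<and> card R = 0 \<or> card L = 0 \<and> card R = 2"
    using LR(6,7,9) \<open>\<not> 4 \<le> card c\<close> by presburger
  then show False
  proof (elim disjE conjE)
    assume "card L = 0" "card R = 0"
    then show False
      using LR(1,4,5) \<open>c \<noteq> {}\<close> by simp
  next
    assume "card L = 2" "card R = 0"
    then obtain a e where "L = {a, e}" "a \<noteq> e" "R = {}"
      using LR(5) unfolding card_2_iff by auto
    then show False
      using LR(2,8) bij_pts_eq_empty_iff[OF \<tau>, of "vadd a e"] by (simp add: vsum_doubleton vadd_in_pts)
  next
    assume "card L = 0" "card R = 2"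
    then obtain b d where "L = {}" "R = {b, d}" "b \<noteq> d"
      using LR(4) unfolding card_2_iff by auto
    then show False
      using LR(8) \<tau>(2) by (simp add: vsum_doubleton)
  qed
qed

lemma empty_in_S_code:
  "\<tau> ` pts r \<subseteq> pts r \<Longrightarrow> \<tau> {} = {} \<Longrightarrow> {} \<in> S_code r \<tau>"
  by (simp add: S_code_iff)

lemma S_code_subset_coords:
  "\<tau> ` pts r \<subseteq> pts r \<Longrightarrow> \<tau> {} = {} \<Longrightarrow> c \<in> S_code r \<tau> \<Longrightarrow> c \<subseteq> coords r"
  by (simp add: S_code_iff)

lemma SQS_subset_coords:
  "bij_betw \<tau> (pts r) (pts r) \<Longrightarrow> \<tau> {} = {} \<Longrightarrow> b \<in> SQS r \<tau> \<Longrightarrow> b \<subseteq> coords r"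
  using S_code_subset_coords[OF bij_betw_imp_surj_on[THEN equalityD1]] by (simp add: SQS_eq)

definition code_kernel :: "'a set set \<Rightarrow> 'a set set" where
  "code_kernel C = {b. \<forall>c\<in>C. vadd b c \<in> C}"

lemma code_kernelI: "(\<And>c. c \<in> C \<Longrightarrow> vadd b c \<in> C) \<Longrightarrow> b \<in> code_kernel C"
  by (simp add: code_kernel_def)

lemma code_kernelD: "b \<in> code_kernel C \<Longrightarrow> c \<in> C \<Longrightarrow> vadd b c \<in> C"
  by (simp add: code_kernel_def)

definition closed_block :: "'a set set \<Rightarrow> 'a set \<Rightarrow> bool" where
  "closed_block B b \<longleftrightarrow> b \<in> B \<and> (\<forall>b'\<in>B. card (b \<inter> b') = 2 \<longrightarrow> vadd b b' \<in> B)"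

lemma closed_block_image:
  assumes "inj_on \<pi> P" "\<forall>b\<in>B. b \<subseteq> P" "(\<lambda>b. \<pi> ` b) ` B = B'" "closed_block B b"
  shows "closed_block B' (\<pi> ` b)"
  unfolding closed_block_def
proof (intro conjI ballI impI)
  have "b \<in> B" "b \<subseteq> P"
    using assms(2,4) by (auto simp: closed_block_def)
  then show "\<pi> ` b \<in> B'"
    using assms(3) by blast
  fix b'
  assume "b' \<in> B'" "card (\<pi> ` b \<inter> b') = 2"
  then obtain b0 where "b0 \<in> B" "b' = \<pi> ` b0"
    using assms(3) by blast
  have "b0 \<subseteq> P"
    using assms(2) \<open>b0 \<in> B\<close> by blast
  have "card (b \<inter> b0) = 2"
    using \<open>card (\<pi> ` b \<inter> b') = 2\<close> \<open>b' = \<pi> ` b0\<close> \<open>b \<subseteq> P\<close> \<open>b0 \<subseteq> P\<close>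
      inj_on_image_Int[OF assms(1)] card_image[OF inj_on_subset[OF assms(1)]]
    by (metis inf.coboundedI1)
  then have "vadd b b0 \<in> B"
    using assms(4) \<open>b0 \<in> B\<close> by (simp add: closed_block_def)
  moreover have "\<pi> ` vadd b b0 = vadd (\<pi> ` b) b'"
    using image_vadd[OF assms(1) \<open>b \<subseteq> P\<close> \<open>b0 \<subseteq> P\<close>] \<open>b' = \<pi> ` b0\<close> by simp
  ultimately show "vadd (\<pi> ` b) b' \<in> B'"
    using assms(3) by blast
qed

lemma kernel_block_closed:
  assumes \<tau>: "bij_betw \<tau> (pts r) (pts r)" "\<tau> {} = {}"
    and "b \<in> SQS r \<tau>" "b \<in> code_kernel (S_code r \<tau>)"
  shows "closed_block (SQS r \<tau>) b"
  unfolding closed_block_def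
proof (intro conjI ballI impI)
  show "b \<in> SQS r \<tau>"
    by fact
  fix b'
  assume "b' \<in> SQS r \<tau>" "card (b \<inter> b') = 2"
  then have "vadd b b' \<in> S_code r \<tau>"
    using code_kernelD[OF assms(4)] SQS_eq[OF \<tau>] by blast
  moreover have "card (vadd b b') = 4"
    using card_vadd[of b b'] \<open>card (b \<inter> b') = 2\<close> \<open>b' \<in> SQS r \<tau>\<close> assms(3)
    by (simp add: SQS_eq[OF \<tau>] card_ge_0_finite)
  ultimately show "vadd b b' \<in> SQS r \<tau>"
    by (simp add: SQS_eq[OF \<tau>])
qed

lemma quadruple_blocks_in_kernel:
  assumes "\<tau> ` pts r \<subseteq> pts r" "\<tau> {} = {}"
  shows "Q0 r \<union> Q1 r \<subseteq> code_kernel (S_code r \<tau>)"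
proof
  have vadd_quadruple: "vadd q A \<subseteq> pts r \<and> (even (card (vadd q A)) \<longleftrightarrow> even (card A))
      \<and> vsum (vadd q A) = vsum A" if "q \<in> quadruples r" "A \<subseteq> pts r" for q A
    using that finite_subset_pts[of A r]
    by (auto simp: quadruples_def even_card_vadd vsum_vadd finite_subset_pts vadd_subset)
  fix b
  assume "b \<in> Q0 r \<union> Q1 r"
  then obtain q where "q \<in> quadruples r" "b = q <+> {} \<or> b = {} <+> q"
    by (auto simp: Q0_eq Q1_eq Plus_def)
  show "b \<in> code_kernel (S_code r \<tau>)"
  proof (rule code_kernelI)
    fix c
    assume "c \<in> S_code r \<tau>"
    then obtain L R where "c = L <+> R" "L \<subseteq> pts r" "R \<subseteq> pts r" "even (card L)" "even (card R)"
      "vsum R = \<tau> (vsum L)"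
      using S_code_halvesE[OF assms] by blast
    then show "vadd b c \<in> S_code r \<tau>"
      using \<open>b = q <+> {} \<or> b = {} <+> q\<close> vadd_quadruple[OF \<open>q \<in> quadruples r\<close>]
      by (auto simp: Plus_in_S_code_iff[OF assms])
  qed
qed

text \<open>Adding the mixed block through Inl a and Inr b in direction w to the one in direction u
  gives a word whose membership in S_\<tau> is exactly the additivity equation.\<close>

lemma closed_mixed_block_additive:
  assumes \<tau>: "bij_betw \<tau> (pts r) (pts r)" "\<tau> {} = {}"
    and "a \<in> pts r" "b \<in> pts r" "u \<in> pts r" "u \<noteq> {}" "w \<in> pts r"
    and closed: "closed_block (SQS r \<tau>) ({a, vadd a u} <+> {b, vadd b (\<tau> u)})"
  shows "\<tau> (vadd u w) = vadd (\<tau> u) (\<tau> w)"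
proof (cases "w = {} \<or> w = u")
  case True
  then show ?thesis
    using \<tau>(2) by auto
next
  case False
  then have "w \<noteq> {}" "w \<noteq> u"
    by auto
  note S_iff = Plus_in_S_code_iff[OF bij_betw_imp_surj_on[OF \<tau>(1), THEN equalityD1] \<tau>(2)]
  have \<tau>_pts: "\<tau> u \<in> pts r" "\<tau> w \<in> pts r"
    using bij_betw_apply[OF \<tau>(1)] \<open>u \<in> pts r\<close> \<open>w \<in> pts r\<close> by simp_all
  have "\<tau> w \<noteq> {}" "\<tau> u \<noteq> \<tau> w"
    using \<open>w \<noteq> {}\<close> \<open>w \<noteq> u\<close> \<open>u \<in> pts r\<close> \<open>w \<in> pts r\<close> bij_pts_eq_empty_iff[OF \<tau>]
      bij_betw_imp_inj_on[OF \<tau>(1)] by (auto dest: inj_onD)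
  define blk blk' where "blk = {a, vadd a u} <+> {b, vadd b (\<tau> u)}"
    and "blk' = {a, vadd a w} <+> {b, vadd b (\<tau> w)}"
  have "blk' \<in> SQS r \<tau>"
    using \<open>w \<noteq> {}\<close> \<open>w \<noteq> u\<close> \<open>\<tau> w \<noteq> {}\<close> \<open>a \<in> pts r\<close> \<open>b \<in> pts r\<close> \<open>w \<in> pts r\<close> \<tau>_pts
    by (simp add: blk'_def SQS_eq[OF \<tau>] S_iff card_Plus vsum_doubleton vadd_in_pts)
  moreover have "card (blk \<inter> blk') = 2"
    using \<open>w \<noteq> {}\<close> \<open>w \<noteq> u\<close> \<open>u \<noteq> {}\<close> \<open>\<tau> u \<noteq> \<tau> w\<close> \<open>\<tau> w \<noteq> {}\<close> \<tau>(2) bij_pts_eq_empty_iff[OF \<tau> \<open>u \<in> pts r\<close>]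
    by (auto simp: blk_def blk'_def card_Plus)
  ultimately have "vadd blk blk' \<in> S_code r \<tau>"
    using closed SQS_eq[OF \<tau>] by (auto simp: closed_block_def blk_def)
  moreover have "vadd blk blk' = {vadd a u, vadd a w} <+> {vadd b (\<tau> u), vadd b (\<tau> w)}"
    using \<open>w \<noteq> {}\<close> \<open>w \<noteq> u\<close> \<open>u \<noteq> {}\<close> \<open>\<tau> u \<noteq> \<tau> w\<close> \<open>\<tau> w \<noteq> {}\<close> bij_pts_eq_empty_iff[OF \<tau> \<open>u \<in> pts r\<close>]
    by (simp add: blk_def blk'_def vadd_doubletons)
  ultimately show ?thesis
    using \<open>w \<noteq> {}\<close> \<open>w \<noteq> u\<close> \<open>\<tau> u \<noteq> \<tau> w\<close> by (simp add: S_iff vsum_doubleton vadd_vadd_same_left)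
qed

lemma closed_mixed_block_in_kernel:
  assumes \<tau>: "bij_betw \<tau> (pts r) (pts r)" "\<tau> {} = {}"
    and "a \<in> pts r" "b \<in> pts r" "u \<in> pts r" "u \<noteq> {}"
    and closed: "closed_block (SQS r \<tau>) ({a, vadd a u} <+> {b, vadd b (\<tau> u)})"
  shows "{a, vadd a u} <+> {b, vadd b (\<tau> u)} \<in> code_kernel (S_code r \<tau>)"
proof (rule code_kernelI)
  note \<tau>_pts = bij_betw_imp_surj_on[OF \<tau>(1), THEN equalityD1]
  have "\<tau> u \<in> pts r" "\<tau> u \<noteq> {}"
    using \<tau>_pts \<open>u \<in> pts r\<close> \<open>u \<noteq> {}\<close> bij_pts_eq_empty_iff[OF \<tau>] by auto
  fix c
  assume "c \<in> S_code r \<tau>"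
  then obtain L R where "c = L <+> R" "L \<subseteq> pts r" "R \<subseteq> pts r" "finite L" "finite R"
    "even (card L)" "even (card R)" "vsum R = \<tau> (vsum L)"
    using S_code_halvesE[OF \<tau>_pts \<tau>(2)] by blast
  have "vsum (vadd {b, vadd b (\<tau> u)} R) = vadd (\<tau> u) (\<tau> (vsum L))"
    using \<open>\<tau> u \<noteq> {}\<close> \<open>finite R\<close> \<open>vsum R = \<tau> (vsum L)\<close> by (simp add: vsum_vadd vsum_doubleton)
  also have "\<dots> = \<tau> (vadd u (vsum L))"
    using closed_mixed_block_additive[OF assms(1-6) vsum_in_pts[OF \<open>L \<subseteq> pts r\<close>] closed] by simp
  also have "\<dots> = \<tau> (vsum (vadd {a, vadd a u} L))"
    using \<open>u \<noteq> {}\<close> \<open>finite L\<close> by (simp add: vsum_vadd vsum_doubleton)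
  finally show "vadd ({a, vadd a u} <+> {b, vadd b (\<tau> u)}) c \<in> S_code r \<tau>"
    using \<open>c = L <+> R\<close> \<open>L \<subseteq> pts r\<close> \<open>R \<subseteq> pts r\<close> \<open>even (card L)\<close> \<open>even (card R)\<close>
      \<open>finite L\<close> \<open>finite R\<close> \<open>u \<noteq> {}\<close> \<open>\<tau> u \<noteq> {}\<close> \<open>a \<in> pts r\<close> \<open>b \<in> pts r\<close> \<open>u \<in> pts r\<close> \<open>\<tau> u \<in> pts r\<close>
    by (simp add: Plus_in_S_code_iff[OF \<tau>_pts \<tau>(2)] even_card_vadd vadd_in_pts vadd_subset)
qed

lemma closed_block_in_kernel:
  assumes \<tau>: "bij_betw \<tau> (pts r) (pts r)" "\<tau> {} = {}" and "closed_block (SQS r \<tau>) blk"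
  shows "blk \<in> code_kernel (S_code r \<tau>)"
proof -
  note \<tau>_pts = bij_betw_imp_surj_on[OF \<tau>(1), THEN equalityD1]
  have "blk \<in> Q0 r \<union> Q1 r \<or> blk \<in> Qtau r \<tau>"
    using assms(3) by (auto simp: closed_block_def SQS_def)
  then show ?thesis
  proof
    assume "blk \<in> Q0 r \<union> Q1 r"
    then show ?thesis
      using quadruple_blocks_in_kernel[OF \<tau>_pts \<tau>(2)] by blast
  next
    assume "blk \<in> Qtau r \<tau>"
    then obtain a e b d where blk: "blk = {a, e} <+> {b, d}" "a \<in> pts r" "e \<in> pts r" "b \<in> pts r"
      "\<tau> (vadd a e) = vadd b d" "vadd b d \<noteq> {}"
      unfolding Qtau_def Plus_def by blast
    define u where "u = vadd a e"
    have "u \<in> pts r" "u \<noteq> {}"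
      using blk \<tau>(2) by (auto simp: u_def vadd_in_pts)
    moreover have "blk = {a, vadd a u} <+> {b, vadd b (\<tau> u)}"
      using blk by (simp add: u_def)
    ultimately show ?thesis
      using closed_mixed_block_in_kernel[OF \<tau> blk(2,4)] assms(3) by simp
  qed
qed

lemma quadruple_meeting_three:
  assumes "A \<subseteq> pts r" "3 \<le> card A"
  obtains q where "q \<in> quadruples r" "3 \<le> card (q \<inter> A)"
proof -
  obtain T where "T \<subseteq> A" "card T = 3"
    using obtain_subset_with_card_n[OF assms(2)] by metis
  then obtain p s t where "T = {p, s, t}" "p \<noteq> s" "s \<noteq> t" "p \<noteq> t"
    unfolding card_3_iff by blast
  define x where "x = vadd (vadd p s) t"
  have "vadd p x = vadd s t" "vadd s x = vadd p t" "vadd t x = vadd p s"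
    by (auto simp: x_def vadd_def)
  then have "x \<noteq> p" "x \<noteq> s" "x \<noteq> t"
    using \<open>p \<noteq> s\<close> \<open>s \<noteq> t\<close> \<open>p \<noteq> t\<close> by auto
  have "p \<in> pts r" "s \<in> pts r" "t \<in> pts r"
    using \<open>T \<subseteq> A\<close> \<open>T = {p, s, t}\<close> assms(1) by auto
  then have "{p, s, t, x} \<in> quadruples r"
    using \<open>vadd t x = vadd p s\<close> \<open>x \<noteq> p\<close> \<open>x \<noteq> s\<close> \<open>x \<noteq> t\<close> \<open>p \<noteq> s\<close> \<open>s \<noteq> t\<close> \<open>p \<noteq> t\<close>
    by (simp add: quadruples_def vsum_four x_def vadd_in_pts)
  moreover have "3 \<le> card ({p, s, t, x} \<inter> A)"
    using card_mono[of "{p, s, t, x} \<inter> A" T] \<open>card T = 3\<close> \<open>T \<subseteq> A\<close> \<open>T = {p, s, t}\<close> by auto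
  ultimately show thesis
    by (rule that)
qed

lemma S_code_reduction:
  assumes "\<tau> ` pts r \<subseteq> pts r" "\<tau> {} = {}" "c \<in> S_code r \<tau>" "4 < card c"
  obtains b where "b \<in> Q0 r \<union> Q1 r" "card (vadd b c) < card c"
proof -
  obtain L R where LR: "c = L <+> R" "L \<subseteq> pts r" "R \<subseteq> pts r" "finite L" "finite R"
    "card c = card L + card R"
    using S_code_halvesE[OF assms(1-3)] by blast
  then have "3 \<le> card L \<or> 3 \<le> card R"
    using \<open>4 < card c\<close> by linarith
  then show thesis
  proof
    assume "3 \<le> card L"
    then obtain q where "q \<in> quadruples r" "3 \<le> card (q \<inter> L)"
      using quadruple_meeting_three[OF \<open>L \<subseteq> pts r\<close>] by blast
    moreover have "q <+> {} \<in> Q0 r"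
      using \<open>q \<in> quadruples r\<close> by (simp add: Q0_eq Plus_def)
    moreover have "card (vadd (q <+> {}) c) < card c"
      using LR(1,4,5) \<open>3 \<le> card (q \<inter> L)\<close> \<open>q \<in> quadruples r\<close>
      by (intro card_vadd_less) (auto simp: card_Plus quadruples_def finite_subset_pts)
    ultimately show thesis
      using that by blast
  next
    assume "3 \<le> card R"
    then obtain q where "q \<in> quadruples r" "3 \<le> card (q \<inter> R)"
      using quadruple_meeting_three[OF \<open>R \<subseteq> pts r\<close>] by blast
    moreover have "{} <+> q \<in> Q1 r"
      using \<open>q \<in> quadruples r\<close> by (simp add: Q1_eq Plus_def)
    moreover have "card (vadd ({} <+> q) c) < card c"
      using LR(1,4,5) \<open>3 \<le> card (q \<inter> R)\<close> \<open>q \<in> quadruples r\<close>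
      by (intro card_vadd_less) (auto simp: card_Plus quadruples_def finite_subset_pts)
    ultimately show thesis
      using that by blast
  qed
qed

lemma kernel_block_image_in_kernel:
  assumes \<tau>: "bij_betw \<tau> (pts r) (pts r)" "\<tau> {} = {}"
    and \<tau>': "bij_betw \<tau>' (pts r) (pts r)" "\<tau>' {} = {}"
    and \<pi>: "bij_betw \<pi> (coords r) (coords r)" "(\<lambda>q. \<pi> ` q) ` SQS r \<tau> = SQS r \<tau>'"
    and "b \<in> SQS r \<tau>" "b \<in> code_kernel (S_code r \<tau>)"
  shows "\<pi> ` b \<in> code_kernel (S_code r \<tau>')"
proof -
  have "closed_block (SQS r \<tau>) b"
    using kernel_block_closed[OF \<tau> assms(7,8)] .
  then have "closed_block (SQS r \<tau>') (\<pi> ` b)"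
    using closed_block_image[OF bij_betw_imp_inj_on[OF \<pi>(1)] _ \<pi>(2)] SQS_subset_coords[OF \<tau>]
    by blast
  then show ?thesis
    by (rule closed_block_in_kernel[OF \<tau>'])
qed

lemma S_code_image_subset:
  assumes \<tau>: "bij_betw \<tau> (pts r) (pts r)" "\<tau> {} = {}"
    and \<tau>': "bij_betw \<tau>' (pts r) (pts r)" "\<tau>' {} = {}"
    and \<pi>: "bij_betw \<pi> (coords r) (coords r)" "(\<lambda>q. \<pi> ` q) ` SQS r \<tau> = SQS r \<tau>'"
    and "c \<in> S_code r \<tau>"
  shows "\<pi> ` c \<in> S_code r \<tau>'"
  using \<open>c \<in> S_code r \<tau>\<close>
proof (induction "card c" arbitrary: c rule: less_induct)
  case less
  note \<tau>_pts = bij_betw_imp_surj_on[OF \<tau>(1), THEN equalityD1]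
  consider "c = {}" | "card c = 4" | "4 < card c"
    using S_code_card_ge_4[OF \<tau> less.prems] by fastforce
  then show ?case
  proof cases
    case 1
    then show ?thesis
      using empty_in_S_code[OF bij_betw_imp_surj_on[OF \<tau>'(1), THEN equalityD1] \<tau>'(2)] by simp
  next
    case 2
    then have "\<pi> ` c \<in> SQS r \<tau>'"
      using less.prems \<pi>(2) SQS_eq[OF \<tau>] by blast
    then show ?thesis
      by (simp add: SQS_eq[OF \<tau>'])
  next
    case 3
    then obtain b where b: "b \<in> Q0 r \<union> Q1 r" "card (vadd b c) < card c"
      using S_code_reduction[OF \<tau>_pts \<tau>(2) less.prems] by blast
    have "b \<in> SQS r \<tau>"
      using b(1) by (auto simp: SQS_def)
    moreover have "b \<in> code_kernel (S_code r \<tau>)"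
      using b(1) quadruple_blocks_in_kernel[OF \<tau>_pts \<tau>(2)] by blast
    ultimately have "\<pi> ` b \<in> code_kernel (S_code r \<tau>')"
      by (rule kernel_block_image_in_kernel[OF \<tau> \<tau>' \<pi>])
    moreover have "\<pi> ` vadd b c \<in> S_code r \<tau>'"
      using less.hyps b(2) code_kernelD[OF \<open>b \<in> code_kernel (S_code r \<tau>)\<close> less.prems] by blast
    ultimately have "vadd (\<pi> ` b) (\<pi> ` vadd b c) \<in> S_code r \<tau>'"
      by (rule code_kernelD)
    moreover have "vadd (\<pi> ` b) (\<pi> ` vadd b c) = \<pi> ` c"
      using image_vadd[OF bij_betw_imp_inj_on[OF \<pi>(1)]] vadd_subset
        SQS_subset_coords[OF \<tau> \<open>b \<in> SQS r \<tau>\<close>] S_code_subset_coords[OF \<tau>_pts \<tau>(2) less.prems]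
      by (metis vadd_simps(4))
    ultimately show ?thesis
      by simp
  qed
qed

lemma image_inv_into_family:
  assumes "inj_on \<pi> P" "\<forall>A\<in>\<A>. A \<subseteq> P" "(\<lambda>A. \<pi> ` A) ` \<A> = \<B>"
  shows "(\<lambda>B. inv_into P \<pi> ` B) ` \<B> = \<A>"
proof -
  have "(\<lambda>B. inv_into P \<pi> ` B) ` \<B> = (\<lambda>A. inv_into P \<pi> ` \<pi> ` A) ` \<A>"
    unfolding assms(3)[symmetric] image_image ..
  also have "\<dots> = \<A>"
    using assms(1,2) by (simp cong: image_cong)
  finally show ?thesis .
qed

lemma S_code_image_eq_if_SQS_image_eq:
  assumes \<tau>: "bij_betw \<tau> (pts r) (pts r)" "\<tau> {} = {}"
    and \<tau>': "bij_betw \<tau>' (pts r) (pts r)" "\<tau>' {} = {}"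
    and \<pi>: "bij_betw \<pi> (coords r) (coords r)" "(\<lambda>q. \<pi> ` q) ` SQS r \<tau> = SQS r \<tau>'"
  shows "(\<lambda>c. \<pi> ` c) ` S_code r \<tau> = S_code r \<tau>'"
proof
  show "(\<lambda>c. \<pi> ` c) ` S_code r \<tau> \<subseteq> S_code r \<tau>'"
    using S_code_image_subset[OF \<tau> \<tau>' \<pi>] by blast
  define \<iota> where "\<iota> = inv_into (coords r) \<pi>"
  have \<iota>: "bij_betw \<iota> (coords r) (coords r)"
    unfolding \<iota>_def using \<pi>(1) by (rule bij_betw_inv_into)
  have "\<forall>b\<in>SQS r \<tau>. b \<subseteq> coords r"
    using SQS_subset_coords[OF \<tau>] by blast
  then have "(\<lambda>q. \<iota> ` q) ` SQS r \<tau>' = SQS r \<tau>"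
    unfolding \<iota>_def using image_inv_into_family[OF bij_betw_imp_inj_on[OF \<pi>(1)] _ \<pi>(2)] by blast
  show "S_code r \<tau>' \<subseteq> (\<lambda>c. \<pi> ` c) ` S_code r \<tau>"
  proof
    fix c
    assume "c \<in> S_code r \<tau>'"
    then have "\<iota> ` c \<in> S_code r \<tau>"
      using S_code_image_subset[OF \<tau>' \<tau> \<iota> \<open>(\<lambda>q. \<iota> ` q) ` SQS r \<tau>' = SQS r \<tau>\<close>] by blast
    moreover have "c = \<pi> ` \<iota> ` c"
      unfolding \<iota>_def using image_inv_into_cancel[OF bij_betw_imp_surj_on[OF \<pi>(1)]]
        S_code_subset_coords[OF bij_betw_imp_surj_on[OF \<tau>'(1), THEN equalityD1] \<tau>'(2) \<open>c \<in> S_code r \<tau>'\<close>]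
      by simp
    ultimately show "c \<in> (\<lambda>c. \<pi> ` c) ` S_code r \<tau>"
      by blast
  qed
qed

lemma isom_map_isom_map:
  assumes "inj_on \<sigma> P" "x \<subseteq> P" "\<pi> ` y \<subseteq> P"
  shows "isom_map z \<sigma> (isom_map x \<pi> y) = isom_map (vadd z (\<sigma> ` x)) (\<sigma> \<circ> \<pi>) y"
  using image_vadd[OF assms] by (simp add: isom_map_def vadd_assoc image_comp)

text \<open>Composing with an automorphism of C' that moves the image of the zero word back to zero
  leaves a pure coordinate permutation.\<close>

lemma transitive_code_permutation_equivalent:
  assumes "transitive_code r C'" "{} \<in> C" "{} \<in> C'" "\<forall>c\<in>C. c \<subseteq> coords r"
    and "x \<subseteq> coords r" "bij_betw \<pi> (coords r) (coords r)" "isom_map x \<pi> ` C = C'"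
  obtains \<rho> where "bij_betw \<rho> (coords r) (coords r)" "(\<lambda>c. \<rho> ` c) ` C = C'"
proof -
  have "isom_map x \<pi> {} = x"
    by (simp add: isom_map_def)
  then have "x \<in> C'"
    using assms(2,7) imageI[of "{}" C "isom_map x \<pi>"] by simp
  with assms(1,3) obtain z \<sigma> where \<sigma>: "bij_betw \<sigma> (coords r) (coords r)" "isom_map z \<sigma> ` C' = C'"
    "isom_map z \<sigma> x = {}"
    unfolding transitive_code_def by meson
  then have "vadd z (\<sigma> ` x) = {}"
    by (simp add: isom_map_def)
  have "isom_map z \<sigma> (isom_map x \<pi> c) = (\<sigma> \<circ> \<pi>) ` c" if "c \<in> C" for c
  proof -
    have "\<pi> ` c \<subseteq> coords r"
      using assms(4,6) that bij_betw_imp_surj_on by blast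
    then show ?thesis
      using isom_map_isom_map[OF bij_betw_imp_inj_on[OF \<sigma>(1)] assms(5)] \<open>vadd z (\<sigma> ` x) = {}\<close>
      by (simp add: isom_map_def)
  qed
  then have "(\<lambda>c. (\<sigma> \<circ> \<pi>) ` c) ` C = isom_map z \<sigma> ` isom_map x \<pi> ` C"
    by (simp add: image_image cong: image_cong)
  also have "\<dots> = C'"
    using assms(7) \<sigma>(2) by simp
  finally show thesis
    using that bij_betw_trans[OF assms(6) \<sigma>(1)] by blast
qed

lemma image_card_filter_eq:
  assumes "inj_on \<rho> P" "\<forall>A\<in>\<A>. A \<subseteq> P" "(\<lambda>A. \<rho> ` A) ` \<A> = \<B>"
  shows "(\<lambda>A. \<rho> ` A) ` {A \<in> \<A>. card A = k} = {B \<in> \<B>. card B = k}"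
proof -
  have "card (\<rho> ` A) = card A" if "A \<in> \<A>" for A
    using assms(1,2) that by (meson card_image inj_on_subset)
  then show ?thesis
    using assms(3) by auto
qed

lemma SQS_image_eq_if_S_code_image_eq:
  assumes \<tau>: "bij_betw \<tau> (pts r) (pts r)" "\<tau> {} = {}"
    and \<tau>': "bij_betw \<tau>' (pts r) (pts r)" "\<tau>' {} = {}"
    and "bij_betw \<rho> (coords r) (coords r)" "(\<lambda>c. \<rho> ` c) ` S_code r \<tau> = S_code r \<tau>'"
  shows "(\<lambda>c. \<rho> ` c) ` SQS r \<tau> = SQS r \<tau>'"
  unfolding SQS_eq[OF \<tau>] SQS_eq[OF \<tau>']
  using image_card_filter_eq[OF bij_betw_imp_inj_on[OF assms(5)] _ assms(6)]
    S_code_subset_coords[OF bij_betw_imp_surj_on[OF \<tau>(1), THEN equalityD1] \<tau>(2)]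
  by blast

theorem corollary3:
  fixes r :: nat and \<tau> \<tau>' :: "nat set \<Rightarrow> nat set"
  assumes "r \<ge> 1"
    and "bij_betw \<tau> (pts r) (pts r)" and "\<tau> {} = {}"
    and "bij_betw \<tau>' (pts r) (pts r)" and "\<tau>' {} = {}"
    and "transitive_code r (S_code r \<tau>)" and "transitive_code r (S_code r \<tau>')"
  shows "(\<exists>x \<pi>. x \<subseteq> coords r \<and> bij_betw \<pi> (coords r) (coords r)
            \<and> isom_map x \<pi> ` S_code r \<tau> = S_code r \<tau>')
     \<longleftrightarrow> (\<exists>\<pi>'. bij_betw \<pi>' (coords r) (coords r)
            \<and> (\<lambda>q. \<pi>' ` q) ` SQS r \<tau> = SQS r \<tau>')"
proof
  note \<tau> = assms(2,3) and \<tau>' = assms(4,5)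
  note \<tau>_pts = bij_betw_imp_surj_on[OF \<tau>(1), THEN equalityD1]
  note \<tau>'_pts = bij_betw_imp_surj_on[OF \<tau>'(1), THEN equalityD1]
  assume "\<exists>x \<pi>. x \<subseteq> coords r \<and> bij_betw \<pi> (coords r) (coords r)
            \<and> isom_map x \<pi> ` S_code r \<tau> = S_code r \<tau>'"
  then obtain x \<pi> where equiv: "x \<subseteq> coords r" "bij_betw \<pi> (coords r) (coords r)"
    "isom_map x \<pi> ` S_code r \<tau> = S_code r \<tau>'"
    by blast
  have "\<forall>c\<in>S_code r \<tau>. c \<subseteq> coords r"
    using S_code_subset_coords[OF \<tau>_pts \<tau>(2)] by blast
  then obtain \<rho> where \<rho>: "bij_betw \<rho> (coords r) (coords r)"
    "(\<lambda>c. \<rho> ` c) ` S_code r \<tau> = S_code r \<tau>'"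
    using transitive_code_permutation_equivalent[OF assms(7) empty_in_S_code[OF \<tau>_pts \<tau>(2)]
        empty_in_S_code[OF \<tau>'_pts \<tau>'(2)] _ equiv] by blast
  then show "\<exists>\<pi>'. bij_betw \<pi>' (coords r) (coords r) \<and> (\<lambda>q. \<pi>' ` q) ` SQS r \<tau> = SQS r \<tau>'"
    using SQS_image_eq_if_S_code_image_eq[OF \<tau> \<tau>' \<rho>] by (intro exI[of _ \<rho>] conjI)
next
  assume "\<exists>\<pi>'. bij_betw \<pi>' (coords r) (coords r) \<and> (\<lambda>q. \<pi>' ` q) ` SQS r \<tau> = SQS r \<tau>'"
  then obtain \<pi> where "bij_betw \<pi> (coords r) (coords r)" "(\<lambda>q. \<pi> ` q) ` SQS r \<tau> = SQS r \<tau>'"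
    by blast
  moreover from calculation have "isom_map {} \<pi> ` S_code r \<tau> = S_code r \<tau>'"
    using S_code_image_eq_if_SQS_image_eq[OF assms(2-5)] by (simp add: isom_map_def)
  ultimately show "\<exists>x \<pi>. x \<subseteq> coords r \<and> bij_betw \<pi> (coords r) (coords r)
            \<and> isom_map x \<pi> ` S_code r \<tau> = S_code r \<tau>'"
    by (intro exI[of _ "{}"] exI[of _ \<pi>] conjI) simp_all
qed

end
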